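(* If $A$ and $B$ are pure hyperbolic isometries of $\mathbb{H}^4$ with ultra-parallel axes, then there is a plane $P$ orthogonal to both axes of $A$ and $B$. Hence $A$ and $B$ are linked.
   Context: A pure hyperbolic isometry is a composition of reflections in two ultra-parallel hyperplanes; its invariant geodesic is its axis. A plane is a $2$-dimensional totally geodesic subspace. Two isometries $A,B$ are linked if there are involutions $\alpha,\beta,\gamma$ of $\mathbb{H}^4$ with $A=\alpha\beta$ and $B=\beta\gamma$. *)

theory Defs
  imports "HOL-Analysis.Analysis"
begin

text \<open>Hyperboloid model of hyperbolic 4-space inside R^5 = real^5,
  coordinate 1 being the time-like one.\<close>

type_synonym pt = "real ^ 5"

definition lor :: "pt \<Rightarrow> pt \<Rightarrow> real" where
  "lor x y = (\<Sum>i\<in>UNIV. x $ i * y $ i) - 2 * (x $ 1 * y $ 1)"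

definition H4 :: "pt set" where
  "H4 = {x. lor x x = -1 \<and> x $ 1 > 0}"

definition hdist :: "pt \<Rightarrow> pt \<Rightarrow> real" where
  "hdist x y = arcosh (- lor x y)"

definition isometry :: "(pt \<Rightarrow> pt) \<Rightarrow> bool" where
  "isometry f \<longleftrightarrow> f ` H4 = H4 \<and> (\<forall>x\<in>H4. \<forall>y\<in>H4. hdist (f x) (f y) = hdist x y)"

definition involution :: "(pt \<Rightarrow> pt) \<Rightarrow> bool" where
  "involution f \<longleftrightarrow> isometry f \<and> (\<forall>x\<in>H4. f (f x) = x) \<and> (\<exists>x\<in>H4. f x \<noteq> x)"

definition tg_subspace :: "nat \<Rightarrow> pt set \<Rightarrow> bool" where
  "tg_subspace k S \<longleftrightarrow> (\<exists>V. subspace V \<and> dim V = k + 1 \<and> S = H4 \<inter> V \<and> S \<noteq> {})"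

definition geodesic :: "pt set \<Rightarrow> bool" where
  "geodesic S \<longleftrightarrow> tg_subspace 1 S"

definition plane :: "pt set \<Rightarrow> bool" where
  "plane S \<longleftrightarrow> tg_subspace 2 S"

definition hyperplane :: "pt \<Rightarrow> pt set" where
  "hyperplane u = {x\<in>H4. lor x u = 0}"

definition refl :: "pt \<Rightarrow> pt \<Rightarrow> pt" where
  "refl u x = x - (2 * lor x u / lor u u) *\<^sub>R u"

text \<open>Ultra-parallel: at positive hyperbolic distance (disjoint, not asymptotic).\<close>
definition ultra_parallel :: "pt set \<Rightarrow> pt set \<Rightarrow> bool" where
  "ultra_parallel S T \<longleftrightarrow> (\<exists>e>0. \<forall>x\<in>S. \<forall>y\<in>T. hdist x y \<ge> e)"

definition pure_hyperbolic :: "(pt \<Rightarrow> pt) \<Rightarrow> bool" where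
  "pure_hyperbolic A \<longleftrightarrow> (\<exists>u v. lor u u > 0 \<and> lor v v > 0 \<and>
      ultra_parallel (hyperplane u) (hyperplane v) \<and>
      (\<forall>x\<in>H4. A x = refl u (refl v x)))"

definition axis_of :: "(pt \<Rightarrow> pt) \<Rightarrow> pt set \<Rightarrow> bool" where
  "axis_of A L \<longleftrightarrow> geodesic L \<and> A ` L = L"

text \<open>S meets L orthogonally: at some common point p the tangent vectors
  (vectors of the spans Lorentz-orthogonal to p) are Lorentz-orthogonal.\<close>
definition orthogonal_to :: "pt set \<Rightarrow> pt set \<Rightarrow> bool" where
  "orthogonal_to S L \<longleftrightarrow> (\<exists>p\<in>S \<inter> L. \<forall>v\<in>span L. \<forall>w\<in>span S.
      lor v p = 0 \<longrightarrow> lor w p = 0 \<longrightarrow> lor v w = 0)"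

definition linked :: "(pt \<Rightarrow> pt) \<Rightarrow> (pt \<Rightarrow> pt) \<Rightarrow> bool" where
  "linked A B \<longleftrightarrow> (\<exists>\<alpha> \<beta> \<gamma>. involution \<alpha> \<and> involution \<beta> \<and> involution \<gamma> \<and>
      (\<forall>x\<in>H4. A x = \<alpha> (\<beta> x)) \<and> (\<forall>x\<in>H4. B x = \<beta> (\<gamma> x)))"

end

theory Submission
  imports Defs
begin

text \<open>In the hyperboloid model a pure hyperbolic isometry is the product of the reflections in two
  spacelike normals \<open>u\<close>, \<open>v\<close>. Ultra-parallelism of the two hyperplanes makes \<open>span {u, v}\<close> a
  Lorentzian plane, and the invariant geodesic is its trace on the hyperboloid; it is spanned by
  two null vectors. For ultra-parallel axes all Lorentz products between the null vectors of one
  axis and those of the other are negative, and balancing them picks points \<open>p\<close>, \<open>q\<close> on the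
  axes whose unit tangents \<open>t\<close>, \<open>s\<close> satisfy \<open>t \<bottom> q\<close> and \<open>s \<bottom> p\<close>: the geodesic \<open>pq\<close> is
  the common perpendicular. A vector orthogonal to both axes completes \<open>p\<close>, \<open>q\<close> to a plane
  orthogonal to both. The product \<open>\<beta>\<close> of the reflections in \<open>t\<close> and in the part of \<open>s\<close>
  orthogonal to \<open>t\<close> fixes \<open>p\<close>, \<open>q\<close> and reverses \<open>t\<close>, \<open>s\<close>; conjugation by \<open>\<beta>\<close> inverts each
  translation along its axis, so \<open>\<alpha> = A \<beta>\<close> and \<open>\<gamma> = \<beta> B\<close> are involutions with \<open>A = \<alpha> \<beta>\<close> and
  \<open>B = \<beta> \<gamma>\<close>.\<close>

lemma lor_inner: "lor x y = inner x y - 2 * (x $ 1 * y $ 1)"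
  by (simp add: lor_def inner_vec_def)

lemma lor_sym: "lor x y = lor y x"
  by (simp add: lor_inner inner_commute mult.commute)

lemma lor_add_left: "lor (x + y) z = lor x z + lor y z"
  by (simp add: lor_inner inner_add_left algebra_simps)

lemma lor_add_right: "lor z (x + y) = lor z x + lor z y"
  by (simp add: lor_inner inner_add_right algebra_simps)

lemma lor_diff_left: "lor (x - y) z = lor x z - lor y z"
  by (simp add: lor_inner inner_diff_left algebra_simps)

lemma lor_diff_right: "lor z (x - y) = lor z x - lor z y"
  by (simp add: lor_inner inner_diff_right algebra_simps)

lemma lor_scaleR_left: "lor (c *\<^sub>R x) z = c * lor x z"
  by (simp add: lor_inner algebra_simps)

lemma lor_scaleR_right: "lor z (c *\<^sub>R x) = c * lor z x"
  by (simp add: lor_inner algebra_simps)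

lemma lor_minus_left: "lor (- x) z = - lor x z"
  by (simp add: lor_inner algebra_simps)

lemma lor_minus_right: "lor z (- x) = - lor z x"
  by (simp add: lor_inner algebra_simps)

lemma lor_zero_left [simp]: "lor 0 z = 0"
  by (simp add: lor_inner)

lemma lor_zero_right [simp]: "lor z 0 = 0"
  by (simp add: lor_inner)

lemmas lor_simps = lor_add_left lor_add_right lor_diff_left lor_diff_right
  lor_scaleR_left lor_scaleR_right lor_minus_left lor_minus_right

lemma subspace_lor_orthogonal: "subspace {w. lor a w = 0}"
  by (auto simp: subspace_def lor_simps)

lemma lor_span_eq_0:
  assumes "\<And>s. s \<in> S \<Longrightarrow> lor a s = 0" and "w \<in> span S"
  shows "lor a w = 0"
proof -
  have "w \<in> {w. lor a w = 0}"
    by (rule span_induct[OF assms(2)]) (use subspace_lor_orthogonal assms(1) in auto)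
  then show ?thesis by simp
qed

definition lorentz_frame :: "pt \<Rightarrow> pt \<Rightarrow> bool" where
  "lorentz_frame e f \<longleftrightarrow> lor e e = -1 \<and> lor f f = 1 \<and> lor e f = 0"

lemma lor_lorentz_frame:
  assumes "lorentz_frame e f"
  shows "lor (a *\<^sub>R e + b *\<^sub>R f) (c *\<^sub>R e + d *\<^sub>R f) = - a * c + b * d"
  using assms by (simp add: lorentz_frame_def lor_simps lor_sym[of f e])

subsection \<open>Space and time components\<close>

definition spatial :: "pt \<Rightarrow> pt" where
  "spatial x = x - (x $ 1) *\<^sub>R axis 1 1"

lemma spatial_decomp: "x = spatial x + (x $ 1) *\<^sub>R axis 1 1"
  by (simp add: spatial_def)

lemma spatial_nth_1 [simp]: "spatial x $ 1 = 0"
  by (simp add: spatial_def axis_def)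

lemma lor_spatial: "lor x y = inner (spatial x) (spatial y) - x $ 1 * y $ 1"
proof -
  have "inner x y = inner (spatial x + (x $ 1) *\<^sub>R axis 1 1) (spatial y + (y $ 1) *\<^sub>R axis 1 1)"
    using spatial_decomp[of x] spatial_decomp[of y] by simp
  also have "\<dots> = inner (spatial x) (spatial y) + x $ 1 * y $ 1"
    by (simp add: inner_add_left inner_add_right inner_axis inner_axis' inner_axis_axis)
  finally show ?thesis by (simp add: lor_inner)
qed

lemma lor_self_spatial: "lor x x = (norm (spatial x))\<^sup>2 - (x $ 1)\<^sup>2"
  by (simp add: lor_spatial power2_norm_eq_inner[symmetric] power2_eq_square)

lemma causal_spatial_bound: "lor x x \<le> 0 \<Longrightarrow> norm (spatial x) \<le> \<bar>x $ 1\<bar>"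
  by (rule power2_le_imp_le) (use lor_self_spatial[of x] in auto)

lemma timelike_spatial_bound: "lor x x < 0 \<Longrightarrow> norm (spatial x) < \<bar>x $ 1\<bar>"
  by (rule power_less_imp_less_base[of _ 2]) (use lor_self_spatial[of x] in auto)

lemma lor_neg_future:
  assumes "lor x x \<le> 0" "lor y y \<le> 0" "x $ 1 > 0" "lor x y < 0"
  shows "y $ 1 > 0"
proof (rule ccontr)
  assume "\<not> y $ 1 > 0"
  then have "norm (spatial x) * norm (spatial y) \<le> x $ 1 * (- y $ 1)"
    using causal_spatial_bound[OF assms(1)] causal_spatial_bound[OF assms(2)] assms(3)
    by (intro mult_mono) auto
  then have "lor x y \<ge> 0"
    using Cauchy_Schwarz_ineq2[of "spatial x" "spatial y"] lor_spatial[of x y] by linarith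
  with assms(4) show False by simp
qed

lemma lor_future_le_0:
  assumes "lor x x \<le> 0" "lor y y \<le> 0" "x $ 1 > 0" "y $ 1 > 0"
  shows "lor x y \<le> 0"
proof -
  have "norm (spatial x) * norm (spatial y) \<le> x $ 1 * y $ 1"
    using causal_spatial_bound[OF assms(1)] causal_spatial_bound[OF assms(2)] assms(3,4)
    by (intro mult_mono) auto
  then show ?thesis
    using Cauchy_Schwarz_ineq2[of "spatial x" "spatial y"] lor_spatial[of x y] by linarith
qed

lemma H4_lor_neg_future:
  assumes "x \<in> H4" "lor z z \<le> 0" "lor x z < 0"
  shows "z $ 1 > 0"
  using lor_neg_future[of x z] assms by (simp add: H4_def)

lemma H4_lor_le:
  assumes "x \<in> H4" "y \<in> H4"
  shows "lor x y \<le> -1"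
proof -
  let ?a = "norm (spatial x)" and ?b = "norm (spatial y)"
  have x: "(x $ 1)\<^sup>2 = 1 + ?a\<^sup>2" "x $ 1 > 0"
    using assms(1) lor_self_spatial[of x] by (auto simp: H4_def)
  have y: "(y $ 1)\<^sup>2 = 1 + ?b\<^sup>2" "y $ 1 > 0"
    using assms(2) lor_self_spatial[of y] by (auto simp: H4_def)
  have "(x $ 1 * y $ 1)\<^sup>2 = (1 + ?a\<^sup>2) * (1 + ?b\<^sup>2)"
    using x(1) y(1) by (simp add: power_mult_distrib)
  also have "\<dots> = (1 + ?a * ?b)\<^sup>2 + (?a - ?b)\<^sup>2"
    by (simp add: power2_eq_square algebra_simps)
  finally have "(1 + ?a * ?b)\<^sup>2 + (?a - ?b)\<^sup>2 = (x $ 1 * y $ 1)\<^sup>2" ..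
  then have "(1 + ?a * ?b)\<^sup>2 \<le> (x $ 1 * y $ 1)\<^sup>2"
    using zero_le_power2[of "?a - ?b"] by linarith
  then have "1 + ?a * ?b \<le> x $ 1 * y $ 1"
    by (rule power2_le_imp_le) (use x y in simp)
  then show ?thesis
    using Cauchy_Schwarz_ineq2[of "spatial x" "spatial y"] lor_spatial[of x y] by linarith
qed

lemma spacelike_if_lor_orthogonal_timelike:
  assumes "lor x x < 0" "lor x y = 0" "y \<noteq> 0"
  shows "lor y y > 0"
proof -
  have x: "norm (spatial x) < \<bar>x $ 1\<bar>"
    using timelike_spatial_bound[OF assms(1)] .
  have xy: "inner (spatial x) (spatial y) = x $ 1 * y $ 1"
    using assms(2) lor_spatial[of x y] by simp
  have "spatial y \<noteq> 0"
  proof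
    assume "spatial y = 0"
    then have "y $ 1 = 0"
      using xy x by auto
    then show False
      using spatial_decomp[of y] \<open>spatial y = 0\<close> assms(3) by simp
  qed
  have "\<bar>x $ 1\<bar> * \<bar>y $ 1\<bar> \<le> norm (spatial x) * norm (spatial y)"
    using Cauchy_Schwarz_ineq2[of "spatial x" "spatial y"] xy by (simp add: abs_mult)
  also have "\<dots> < \<bar>x $ 1\<bar> * norm (spatial y)"
    using x \<open>spatial y \<noteq> 0\<close> by simp
  finally have "\<bar>y $ 1\<bar> < norm (spatial y)"
    by (simp add: mult_less_cancel_left)
  then have "(y $ 1)\<^sup>2 < (norm (spatial y))\<^sup>2"
    using power_strict_mono[of "\<bar>y $ 1\<bar>" "norm (spatial y)" 2] by simp
  then show ?thesis
    using lor_self_spatial[of y] by simp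
qed

lemma lor_self_ge_0_if_lor_orthogonal_timelike:
  assumes "lor x x < 0" "lor x y = 0"
  shows "lor y y \<ge> 0"
  using spacelike_if_lor_orthogonal_timelike[OF assms] by (cases "y = 0") auto

lemma null_future_parallel:
  assumes "lor a a = 0" "lor b b = 0" "a $ 1 > 0" "b $ 1 > 0" "lor a b = 0"
  shows "b = (b $ 1 / a $ 1) *\<^sub>R a"
proof -
  have norm_eq: "norm (spatial x) = x $ 1" if "lor x x = 0" "x $ 1 > 0" for x
    using lor_self_spatial[of x] that by (simp add: power2_eq_iff_nonneg)
  have "inner (spatial a) (spatial b) = norm (spatial a) * norm (spatial b)"
    using lor_spatial[of a b] assms norm_eq by simp
  then have "norm (spatial a) *\<^sub>R spatial b = norm (spatial b) *\<^sub>R spatial a"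
    by (simp add: norm_cauchy_schwarz_eq)
  then have "(a $ 1) *\<^sub>R spatial b = (b $ 1) *\<^sub>R spatial a"
    using norm_eq assms by simp
  then have "spatial b = (b $ 1 / a $ 1) *\<^sub>R spatial a"
    using assms(3) by (metis divide_inverse_commute scaleR_scaleR scaleR_one
        right_inverse less_irrefl mult.commute)
  then have "b = (b $ 1 / a $ 1) *\<^sub>R (spatial a + (a $ 1) *\<^sub>R axis 1 1)"
    using spatial_decomp[of b] assms(3) by (simp add: scaleR_add_right)
  then show ?thesis
    using spatial_decomp[of a] by simp
qed

lemma scaleR_timelike_H4:
  assumes "lor z z < 0" "z $ 1 > 0"
  shows "(1 / sqrt (- lor z z)) *\<^sub>R z \<in> H4"
  using assms by (simp add: H4_def lor_simps power2_eq_square[symmetric])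

subsection \<open>Reflections\<close>

text \<open>Dividing by \<open>lor u u = 0\<close> yields the coefficient \<open>0\<close>, so the reflection in a null
  vector is the identity; this is why several facts below need no hypothesis on \<open>u\<close>.\<close>

lemma refl_null: "lor u u = 0 \<Longrightarrow> refl u x = x"
  by (simp add: refl_def)

lemma refl_fixed: "lor x u = 0 \<Longrightarrow> refl u x = x"
  by (simp add: refl_def)

lemma refl_self: "lor u u \<noteq> 0 \<Longrightarrow> refl u u = - u"
  by (simp add: refl_def scaleR_2)

lemma lor_refl: "lor (refl u x) (refl u y) = lor x y"
proof (cases "lor u u = 0")
  case False
  define a where "a = 2 * lor x u / lor u u"
  define b where "b = 2 * lor y u / lor u u"
  have "lor (refl u x) (refl u y) = lor x y - b * lor x u - a * lor u y + a * b * lor u u"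
    unfolding refl_def a_def[symmetric] b_def[symmetric] by (simp add: lor_simps algebra_simps)
  also have "a * b * lor u u = 2 * b * lor x u"
    unfolding a_def using False by simp
  also have "a * lor u y = b * lor x u"
    unfolding a_def b_def using False by (simp add: lor_sym[of u y])
  finally show ?thesis by simp
qed (simp add: refl_null)

lemma refl_refl: "refl u (refl u x) = x"
proof (cases "lor u u = 0")
  case False
  then have "lor (refl u x) u = - lor x u"
    by (simp add: refl_def lor_simps)
  then show ?thesis
    using False by (simp add: refl_def[of u "refl u x"]) (simp add: refl_def algebra_simps)
qed (simp add: refl_null)

lemma linear_refl: "linear (refl u)"
  unfolding refl_def
  by (rule linearI) (simp_all add: lor_simps algebra_simps add_divide_distrib
      scaleR_add_left[symmetric] del: scaleR_add_left)

lemma refl_add: "refl u (x + y) = refl u x + refl u y"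
  using linear_refl[of u] by (simp add: linear_add)

lemma refl_scaleR: "refl u (c *\<^sub>R x) = c *\<^sub>R refl u x"
  using linear_refl[of u] by (simp add: linear_scale)

lemma refl_diff: "refl u (x - y) = refl u x - refl u y"
  using linear_refl[of u] by (simp add: linear_diff)

lemma refl_minus: "refl u (- x) = - refl u x"
  using linear_refl[of u] by (simp add: linear_neg)

lemma refl_commute: "lor u m = 0 \<Longrightarrow> refl u (refl m x) = refl m (refl u x)"
  by (simp add: refl_def lor_simps lor_sym[of m u] algebra_simps)

lemma linear_refl_refl: "linear (\<lambda>x. refl u (refl v x))"
  using linear_compose[OF linear_refl[of v] linear_refl[of u]] by (simp add: o_def)

lemma refl_H4:
  assumes "lor u u \<ge> 0" "x \<in> H4"
  shows "refl u x \<in> H4"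
proof -
  have "lor (refl u x) (refl u x) = -1"
    using lor_refl[of u x x] assms by (simp add: H4_def)
  moreover have "lor x (refl u x) = -1 - 2 * (lor x u)\<^sup>2 / lor u u"
    using assms by (simp add: refl_def lor_simps H4_def power2_eq_square)
  moreover have "2 * (lor x u)\<^sup>2 / lor u u \<ge> 0"
    using assms(1) by simp
  ultimately show ?thesis
    using H4_lor_neg_future[OF assms(2), of "refl u x"] by (simp add: H4_def)
qed

subsection \<open>Isometries and distance\<close>

lemma isometryI:
  assumes "\<And>x y. lor (f x) (f y) = lor x y" "\<And>x. x \<in> H4 \<Longrightarrow> f x \<in> H4"
    "\<And>x. x \<in> H4 \<Longrightarrow> \<exists>y\<in>H4. x = f y"
  shows "isometry f"
  using assms unfolding isometry_def hdist_def by (auto simp: image_def)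

lemma isometry_refl:
  assumes "lor u u \<ge> 0"
  shows "isometry (refl u)"
proof (rule isometryI)
  show "\<exists>y\<in>H4. x = refl u y" if "x \<in> H4" for x
    using refl_H4[OF assms that] refl_refl[of u x] by (intro bexI[of _ "refl u x"]) auto
qed (use lor_refl refl_H4 assms in auto)

lemma isometry_comp:
  assumes "isometry f" "isometry g"
  shows "isometry (\<lambda>x. f (g x))"
  using assms unfolding isometry_def by (simp add: image_image[symmetric]) (metis image_eqI)

lemma hdist_ge_imp_lor_le:
  assumes "x \<in> H4" "y \<in> H4" "hdist x y \<ge> e" "e > 0"
  shows "lor x y \<le> - cosh e"
proof (rule ccontr)
  assume "\<not> ?thesis"
  moreover have "- lor x y \<ge> 1"
    using H4_lor_le[OF assms(1,2)] by simp
  ultimately have "arcosh (- lor x y) < arcosh (cosh e)"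
    using cosh_real_ge_1[of e] by simp
  then have "hdist x y < e"
    using assms(4) by (simp add: hdist_def arcosh_cosh_real)
  with assms(3) show False by simp
qed

text \<open>The foot of the perpendicular from \<open>x\<close> to the hyperplane with normal \<open>v\<close>.\<close>

lemma hyperplane_foot:
  assumes "x \<in> H4" "lor v v > 0"
  defines "m \<equiv> sqrt (1 + (lor x v)\<^sup>2 / lor v v)"
  defines "y \<equiv> (1 / m) *\<^sub>R (x - (lor x v / lor v v) *\<^sub>R v)"
  shows "y \<in> H4" "lor y v = 0" "lor x y = - m" "m \<ge> 1"
proof -
  let ?z = "x - (lor x v / lor v v) *\<^sub>R v"
  have q: "(lor x v)\<^sup>2 / lor v v \<ge> 0"
    using assms(2) by simp
  show m: "m \<ge> 1"
    unfolding m_def using q by simp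
  have zz: "lor ?z ?z = - (m\<^sup>2)" and xz: "lor x ?z = - (m\<^sup>2)"
    unfolding m_def using assms q
    by (simp_all add: lor_simps lor_sym[of v x] H4_def field_simps power2_eq_square)
  have "?z $ 1 > 0"
    using H4_lor_neg_future[OF assms(1), of ?z] zz xz m by simp
  moreover have "y = (1 / sqrt (- lor ?z ?z)) *\<^sub>R ?z"
    unfolding y_def using zz m by simp
  ultimately show "y \<in> H4"
    using scaleR_timelike_H4[of ?z] zz m by simp
  show "lor y v = 0"
    unfolding y_def using assms(2) by (simp add: lor_simps)
  show "lor x y = - m"
    unfolding y_def using xz m by (simp add: lor_simps power2_eq_square)
qed

subsection \<open>Linear algebra in the Lorentz space\<close>

lemma span2_obtain:
  assumes "x \<in> span {a, b}"
  obtains \<alpha> \<beta> where "x = \<alpha> *\<^sub>R a + \<beta> *\<^sub>R b"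
  using assms by (auto simp: span_insert span_singleton) (metis add.commute diff_add_cancel)

lemma span2_lincomb: "\<alpha> *\<^sub>R a + \<beta> *\<^sub>R b \<in> span {a, b}"
  by (intro span_add span_scale span_base) auto

lemma dim_le_1_parallel:
  fixes S :: "'a::euclidean_space set"
  assumes "subspace S" "dim S \<le> 1" "z \<in> S" "z \<noteq> 0" "y \<in> S"
  obtains c where "y = c *\<^sub>R z"
proof -
  have "span {z} \<subseteq> S"
    using assms by (simp add: span_minimal)
  moreover have "dim (span {z}) = 1"
    using assms(4) by simp
  ultimately have "span {z} = S"
    using assms(1,2) by (intro subspace_dim_equal) auto
  then show ?thesis
    using assms(5) that by (auto simp: span_singleton)
qed

lemma lor_eq_inner_time_flip: "lor x y = inner x (y - (2 * y $ 1) *\<^sub>R axis 1 1)"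
  by (simp add: lor_inner inner_diff_right inner_axis algebra_simps)

lemma exists_lor_orthogonal_4:
  obtains n where "n \<noteq> 0" "lor n a = 0" "lor n b = 0" "lor n c = 0" "lor n d = 0"
proof -
  define J where "J y = y - (2 * y $ 1) *\<^sub>R axis 1 1" for y :: pt
  let ?S = "{J a, J b, J c, J d}"
  have "dim ?S \<le> card ?S"
    by (rule dim_le_card) (auto intro: span_base)
  also have "\<dots> \<le> 4"
    using card_length[of "[J a, J b, J c, J d]"] by simp
  finally have "dim ?S < DIM(pt)"
    by simp
  then obtain n where "n \<noteq> 0" "\<And>y. y \<in> span ?S \<Longrightarrow> orthogonal n y"
    using orthogonal_to_subspace_exists by blast
  then show ?thesis
    using that[of n] by (auto intro: span_base simp: lor_eq_inner_time_flip J_def orthogonal_def)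
qed

lemma H4_perturb_timelike:
  assumes "x \<in> H4"
  obtains s where "s > 0" "lor (x + s *\<^sub>R v) (x + s *\<^sub>R v) < 0" "lor x (x + s *\<^sub>R v) < 0"
proof
  define K where "K = 2 * \<bar>lor x v\<bar> + \<bar>lor v v\<bar> + 2"
  define s where "s = 1 / K"
  have K: "K \<ge> 2" and s: "s > 0" "s \<le> 1/2" "s * K = 1"
    unfolding s_def K_def by auto
  show "s > 0"
    by (fact s(1))
  have "s\<^sup>2 * lor v v \<le> s\<^sup>2 * \<bar>lor v v\<bar>"
    by (simp add: mult_left_mono)
  also have "\<dots> \<le> s * \<bar>lor v v\<bar>"
    using s by (simp add: power2_eq_square mult_right_mono)
  finally have "s\<^sup>2 * lor v v \<le> s * \<bar>lor v v\<bar>" .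
  moreover have "2 * s * lor x v \<le> s * (2 * \<bar>lor x v\<bar>)"
    using s by (simp add: mult_left_mono)
  moreover have "s * (2 * \<bar>lor x v\<bar>) + s * \<bar>lor v v\<bar> < s * K"
    using s unfolding K_def by (simp add: algebra_simps)
  moreover have "lor (x + s *\<^sub>R v) (x + s *\<^sub>R v) = -1 + 2 * s * lor x v + s\<^sup>2 * lor v v"
    using assms by (simp add: lor_simps lor_sym[of v x] H4_def power2_eq_square algebra_simps)
  ultimately show "lor (x + s *\<^sub>R v) (x + s *\<^sub>R v) < 0"
    using s by linarith
  have "s * lor x v \<le> s * \<bar>lor x v\<bar>"
    using s by (simp add: mult_left_mono)
  moreover have "s * \<bar>lor x v\<bar> < s * K"
    using s unfolding K_def by (intro mult_strict_left_mono) auto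
  moreover have "lor x (x + s *\<^sub>R v) = -1 + s * lor x v"
    using assms by (simp add: lor_simps H4_def)
  ultimately show "lor x (x + s *\<^sub>R v) < 0"
    using s by linarith
qed

lemma span_H4_inter:
  assumes "subspace V" "x \<in> H4" "x \<in> V"
  shows "span (H4 \<inter> V) = V"
proof
  show "span (H4 \<inter> V) \<subseteq> V"
    using assms(1) by (simp add: span_minimal)
  show "V \<subseteq> span (H4 \<inter> V)"
  proof
    fix v
    assume "v \<in> V"
    obtain s where s: "s > 0" and z: "lor (x + s *\<^sub>R v) (x + s *\<^sub>R v) < 0" "lor x (x + s *\<^sub>R v) < 0"
      using H4_perturb_timelike[OF assms(2)] .
    define z where "z = x + s *\<^sub>R v"
    have zz: "lor z z < 0" "lor x z < 0"
      using z unfolding z_def .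
    have "z $ 1 > 0"
      by (rule H4_lor_neg_future[OF assms(2)]) (use zz in auto)
    define r where "r = sqrt (- lor z z)"
    have "r > 0"
      using zz unfolding r_def by simp
    have "(1 / r) *\<^sub>R z \<in> H4"
      unfolding r_def using scaleR_timelike_H4 zz \<open>z $ 1 > 0\<close> by simp
    moreover have "(1 / r) *\<^sub>R z \<in> V"
      unfolding z_def using assms \<open>v \<in> V\<close> by (simp add: subspace_add subspace_scale)
    ultimately have "r *\<^sub>R ((1 / r) *\<^sub>R z) \<in> span (H4 \<inter> V)"
      by (intro span_scale span_base) auto
    then have "z \<in> span (H4 \<inter> V)"
      using \<open>r > 0\<close> by simp
    moreover have "x \<in> span (H4 \<inter> V)"
      using assms by (auto intro: span_base)
    ultimately have "(1 / s) *\<^sub>R (z - x) \<in> span (H4 \<inter> V)"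
      by (intro span_scale span_diff)
    then show "v \<in> span (H4 \<inter> V)"
      using s unfolding z_def by simp
  qed
qed

subsection \<open>Ultra-parallel hyperplanes\<close>

lemma ultra_parallel_hyperplane_gap:
  assumes "ultra_parallel (hyperplane u) (hyperplane v)" "lor v v > 0"
  obtains \<delta> where "\<delta> > 0" "\<And>x. x \<in> H4 \<Longrightarrow> lor x u = 0 \<Longrightarrow> (lor x v)\<^sup>2 \<ge> \<delta>"
proof -
  obtain e where e: "e > 0" "\<And>x y. x \<in> hyperplane u \<Longrightarrow> y \<in> hyperplane v \<Longrightarrow> hdist x y \<ge> e"
    using assms(1) unfolding ultra_parallel_def by blast
  have c: "cosh e > 1"
    using cosh_real_nonneg_less_iff[of 0 e] e(1) by simp
  have "lor v v * ((cosh e)\<^sup>2 - 1) > 0"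
    using assms(2) c by (simp add: power2_eq_square) (smt (verit) mult_less_cancel_left1 mult_pos_pos)
  moreover have "(lor x v)\<^sup>2 \<ge> lor v v * ((cosh e)\<^sup>2 - 1)" if x: "x \<in> H4" "lor x u = 0" for x
  proof -
    define m where "m = sqrt (1 + (lor x v)\<^sup>2 / lor v v)"
    define y where "y = (1 / m) *\<^sub>R (x - (lor x v / lor v v) *\<^sub>R v)"
    have y: "y \<in> H4" "lor y v = 0" "lor x y = - m"
      using hyperplane_foot[OF x(1) assms(2)] unfolding m_def y_def by auto
    then have "hdist x y \<ge> e"
      using e(2)[of x y] x by (simp add: hyperplane_def)
    then have "m \<ge> cosh e"
      using hdist_ge_imp_lor_le[OF x(1) y(1) _ e(1)] y(3) by simp
    then have "m\<^sup>2 \<ge> (cosh e)\<^sup>2"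
      using c by (intro power_mono) auto
    moreover have "m\<^sup>2 = 1 + (lor x v)\<^sup>2 / lor v v"
      unfolding m_def using assms(2) by (simp add: add_nonneg_nonneg)
    ultimately have "(cosh e)\<^sup>2 - 1 \<le> (lor x v)\<^sup>2 / lor v v"
      by linarith
    then show ?thesis
      using assms(2) by (simp add: pos_le_divide_eq mult.commute)
  qed
  ultimately show ?thesis
    using that by blast
qed

lemma lor_towards_light_cone:
  assumes "x0 \<in> H4" "lor r x0 = 0" "a\<^sup>2 \<le> lor r r" "a \<noteq> 0" "0 < \<epsilon>" "\<epsilon> \<le> 1/2"
  defines "z \<equiv> x0 + ((1 - \<epsilon>) * a / lor r r) *\<^sub>R r"
  shows "- lor z z \<ge> \<epsilon>" "lor z (r + a *\<^sub>R x0) = - a * \<epsilon>" "z $ 1 > 0"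
proof -
  define R where "R = lor r r"
  define \<theta> where "\<theta> = 1 - \<epsilon>"
  have x0x0: "lor x0 x0 = -1"
    using assms(1) by (simp add: H4_def)
  have "a\<^sup>2 > 0"
    using assms(4) by simp
  then have R: "R \<ge> a\<^sup>2" "R > 0"
    unfolding R_def using assms(3) by linarith+
  have "- lor z z = 1 - \<theta>\<^sup>2 * a\<^sup>2 / R"
    unfolding z_def R_def[symmetric] \<theta>_def[symmetric] using x0x0 assms(2) R
    by (simp add: lor_simps lor_sym[of x0 r] R_def[symmetric] power2_eq_square field_simps)
  moreover have "\<theta>\<^sup>2 * a\<^sup>2 / R \<le> \<theta>\<^sup>2"
    using R by (simp add: divide_le_eq mult_left_mono)
  moreover have "1 - \<theta>\<^sup>2 = \<epsilon> * (2 - \<epsilon>)"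
    unfolding \<theta>_def by (simp add: power2_eq_square algebra_simps)
  moreover have "\<epsilon> * (2 - \<epsilon>) \<ge> \<epsilon>"
    using assms(5,6) by (simp add: mult_le_cancel_left1)
  ultimately show D: "- lor z z \<ge> \<epsilon>"
    by linarith
  show "lor z (r + a *\<^sub>R x0) = - a * \<epsilon>"
    unfolding z_def using R x0x0 assms(2) by (simp add: lor_simps lor_sym[of x0 r] R_def[symmetric] field_simps)
  have "lor x0 z = -1"
    unfolding z_def using x0x0 assms(2) by (simp add: lor_simps lor_sym[of x0 r])
  then show "z $ 1 > 0"
    using H4_lor_neg_future[OF assms(1), of z] D assms(5) by simp
qed

text \<open>A vector \<open>w\<close> that is not timelike is a limit of normals of points of \<open>H4\<close>: moving
  from \<open>x0\<close> towards the light cone inside \<open>span {x0, w}\<close> makes \<open>lor x w\<close> as small as we like.\<close>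

lemma H4_lor_arbitrarily_small:
  assumes "x0 \<in> H4" "lor w w \<ge> 0" "\<delta> > 0"
  obtains x where "x \<in> H4" "x \<in> span {x0, w}" "(lor x w)\<^sup>2 < \<delta>"
proof (cases "lor w x0 = 0")
  case True
  then show ?thesis
    using that[of x0] assms by (auto simp: span_base lor_sym)
next
  case False
  define a where "a = - lor w x0"
  define r where "r = w - a *\<^sub>R x0"
  have "a \<noteq> 0"
    using False unfolding a_def by simp
  then have a2: "a\<^sup>2 > 0"
    by simp
  have "lor r x0 = 0"
    unfolding r_def a_def using assms(1) by (simp add: lor_simps H4_def)
  moreover have "lor r r = lor w w + a\<^sup>2"
    unfolding r_def a_def using assms(1)
    by (simp add: lor_simps lor_sym[of x0 w] H4_def power2_eq_square algebra_simps)
  then have "a\<^sup>2 \<le> lor r r"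
    using assms(2) by simp
  moreover define \<epsilon> where "\<epsilon> = min (1/2) (\<delta> / (2 * a\<^sup>2))"
  moreover have \<epsilon>: "\<epsilon> > 0" "\<epsilon> \<le> 1/2" "a\<^sup>2 * \<epsilon> \<le> \<delta> / 2"
    unfolding \<epsilon>_def using assms(3) a2 by (auto simp: min_def field_simps)
  moreover define z where "z = x0 + ((1 - \<epsilon>) * a / lor r r) *\<^sub>R r"
  ultimately have D: "- lor z z \<ge> \<epsilon>" and zw: "lor z w = - a * \<epsilon>" and "z $ 1 > 0"
    using lor_towards_light_cone[OF assms(1) _ _ \<open>a \<noteq> 0\<close>, of r \<epsilon>] unfolding r_def by auto
  define x where "x = (1 / sqrt (- lor z z)) *\<^sub>R z"
  show ?thesis
  proof (rule that[of x])
    show "x \<in> H4"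
      unfolding x_def using scaleR_timelike_H4 D \<epsilon>(1) \<open>z $ 1 > 0\<close> by simp
    have "z = (1 - ((1 - \<epsilon>) * a / lor r r) * a) *\<^sub>R x0 + ((1 - \<epsilon>) * a / lor r r) *\<^sub>R w"
      unfolding z_def r_def by (simp add: algebra_simps)
    then show "x \<in> span {x0, w}"
      unfolding x_def by (metis span2_lincomb span_scale)
    have "(lor x w)\<^sup>2 = a\<^sup>2 * \<epsilon>\<^sup>2 / (- lor z z)"
      unfolding x_def using D \<epsilon> zw by (simp add: lor_simps power_divide power_mult_distrib)
    also have "\<dots> \<le> a\<^sup>2 * \<epsilon>\<^sup>2 / \<epsilon>"
      using D \<epsilon> a2 by (intro divide_left_mono mult_pos_pos) auto
    also have "\<dots> = a\<^sup>2 * \<epsilon>"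
      using \<epsilon> by (simp add: power2_eq_square)
    also have "\<dots> < \<delta>"
      using \<epsilon> assms(3) by simp
    finally show "(lor x w)\<^sup>2 < \<delta>" .
  qed
qed

text \<open>The normals of two ultra-parallel hyperplanes span a Lorentzian plane.\<close>

lemma ultra_parallel_normal_timelike:
  assumes "lor u u > 0" "lor v v > 0" "ultra_parallel (hyperplane u) (hyperplane v)"
  defines "v' \<equiv> v - (lor u v / lor u u) *\<^sub>R u"
  shows "lor v' v' < 0"
proof (rule ccontr)
  assume not_timelike: "\<not> lor v' v' < 0"
  obtain \<delta> where \<delta>: "\<delta> > 0" "\<And>x. x \<in> H4 \<Longrightarrow> lor x u = 0 \<Longrightarrow> (lor x v)\<^sup>2 \<ge> \<delta>"
    using ultra_parallel_hyperplane_gap[OF assms(3,2)] by blast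
  have v'u: "lor v' u = 0"
    unfolding v'_def using assms(1) by (simp add: lor_simps lor_sym[of v u])
  define m where "m = sqrt (1 + (lor (axis 1 1) u)\<^sup>2 / lor u u)"
  define x0 where "x0 = (1 / m) *\<^sub>R (axis 1 1 - (lor (axis 1 1) u / lor u u) *\<^sub>R u)"
  have "axis 1 1 \<in> H4"
    by (simp add: H4_def lor_inner inner_axis_axis)
  then have x0: "x0 \<in> H4" "lor x0 u = 0"
    using hyperplane_foot(1,2)[OF _ assms(1)] unfolding x0_def m_def by auto
  have "lor v' v' \<ge> 0"
    using not_timelike by simp
  then obtain x where x: "x \<in> H4" "x \<in> span {x0, v'}" "(lor x v')\<^sup>2 < \<delta>"
    using H4_lor_arbitrarily_small[OF x0(1) _ \<delta>(1)] by blast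
  have "lor u x0 = 0" "lor u v' = 0"
    using x0(2) v'u by (simp_all add: lor_sym[of u])
  then have "lor u x = 0"
    using lor_span_eq_0[of "{x0, v'}" u x] x(2) by blast
  moreover have "lor x v = lor x v' + (lor u v / lor u u) * lor x u"
    unfolding v'_def by (simp add: lor_simps)
  ultimately show False
    using \<delta>(2)[OF x(1)] x(3) by (simp add: lor_sym[of u x])
qed

subsection \<open>The axis of a pure hyperbolic isometry\<close>

lemma lorentz_frame_span_eq_0:
  assumes "lorentz_frame e f" "z \<in> span {e, f}" "lor z e = 0" "lor z f = 0"
  shows "z = 0"
proof -
  obtain a b where z: "z = a *\<^sub>R e + b *\<^sub>R f"
    using span2_obtain[OF assms(2)] .
  have "lor z e = - a" "lor z f = b"
    unfolding z using assms(1) by (simp_all add: lorentz_frame_def lor_simps lor_sym[of f e])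
  then show ?thesis
    using assms(3,4) z by simp
qed

lemma lorentz_frame_null_orthogonal:
  assumes "lorentz_frame e f" "z \<in> span {e, f}" "z \<noteq> 0" "lor z z = 0"
    "w \<in> span {e, f}" "lor w z = 0"
  shows "lor w w = 0"
proof -
  obtain c d where z: "z = c *\<^sub>R e + d *\<^sub>R f"
    using span2_obtain[OF assms(2)] .
  obtain a b where w: "w = a *\<^sub>R e + b *\<^sub>R f"
    using span2_obtain[OF assms(5)] .
  have cd: "d * d = c * c" and ab: "a * c = b * d"
    using assms(4,6) unfolding z w lor_lorentz_frame[OF assms(1)] by simp_all
  have "c \<noteq> 0"
    using cd assms(3) z by auto
  have "(b * b) * (c * c) = (a * a) * (c * c)"
    using cd ab by (metis mult.assoc mult.commute)
  then have "b * b = a * a"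
    using \<open>c \<noteq> 0\<close> by simp
  then show ?thesis
    unfolding w lor_lorentz_frame[OF assms(1)] by simp
qed

lemma refl_refl_eq_uminus_imp_0:
  assumes "lor u u \<noteq> 0" "lor v v \<noteq> 0" "lor u v \<noteq> 0" "refl u (refl v z) = - z"
  shows "z = 0"
proof -
  define kv where "kv = 2 * lor z v / lor v v"
  define ku where "ku = 2 * lor z u / lor u u"
  have "refl v z = - refl u z"
    using arg_cong[OF assms(4), of "refl u"] refl_refl refl_minus by metis
  then have z: "2 *\<^sub>R z = kv *\<^sub>R v + ku *\<^sub>R u"
    unfolding kv_def ku_def by (simp add: refl_def algebra_simps scaleR_2)
  have "2 * lor z u = kv * lor u v + ku * lor u u"
    using arg_cong[OF z, of "\<lambda>w. lor w u"] by (simp add: lor_simps lor_sym[of v u])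
  moreover have "ku * lor u u = 2 * lor z u"
    unfolding ku_def using assms(1) by simp
  moreover have "2 * lor z v = kv * lor v v + ku * lor u v"
    using arg_cong[OF z, of "\<lambda>w. lor w v"] by (simp add: lor_simps)
  moreover have "kv * lor v v = 2 * lor z v"
    unfolding kv_def using assms(2) by simp
  ultimately have "kv = 0" "ku = 0"
    using assms(3) by simp_all
  then show "z = 0"
    using z by simp
qed

lemma refl_refl_fixed_imp_orthogonal:
  assumes "lor u u \<noteq> 0" "lor v v \<noteq> 0" "v \<notin> span {u}" "refl u (refl v z) = z"
  shows "lor z u = 0" "lor z v = 0"
proof -
  have "refl v z = refl u z"
    using arg_cong[OF assms(4), of "refl u"] refl_refl by metis
  then have eq: "(2 * lor z v / lor v v) *\<^sub>R v = (2 * lor z u / lor u u) *\<^sub>R u"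
    by (simp add: refl_def)
  show zv: "lor z v = 0"
  proof (rule ccontr)
    assume "lor z v \<noteq> 0"
    then have "v = (1 / (2 * lor z v / lor v v)) *\<^sub>R ((2 * lor z v / lor v v) *\<^sub>R v)"
      using assms(2) by simp
    then have "v = (1 / (2 * lor z v / lor v v)) *\<^sub>R ((2 * lor z u / lor u u) *\<^sub>R u)"
      unfolding eq .
    then show False
      using assms(3) by (metis span_base singletonI span_scale)
  qed
  have "u \<noteq> 0"
    using assms(1) by auto
  then show "lor z u = 0"
    using eq zv assms(1) by simp
qed

lemma ultra_parallel_normals_independent:
  assumes u: "lor u u > 0" and v: "lor v v > 0"
    and up: "ultra_parallel (hyperplane u) (hyperplane v)"
  shows "lor u v \<noteq> 0" "v \<notin> span {u}"
proof -
  define v' where "v' = v - (lor u v / lor u u) *\<^sub>R u"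
  have N: "lor v' v' < 0"
    unfolding v'_def using ultra_parallel_normal_timelike[OF u v up] .
  then show "lor u v \<noteq> 0"
    using v unfolding v'_def by auto
  show "v \<notin> span {u}"
  proof
    assume "v \<in> span {u}"
    then obtain c where "v = c *\<^sub>R u"
      by (auto simp: span_singleton)
    then have "v' = 0"
      unfolding v'_def using u by (simp add: lor_simps)
    with N show False
      by simp
  qed
qed

lemma ultra_parallel_lorentz_frame:
  assumes u: "lor u u > 0" and v: "lor v v > 0"
    and up: "ultra_parallel (hyperplane u) (hyperplane v)"
  obtains e f where "lorentz_frame e f" "e $ 1 > 0" "span {e, f} = span {u, v}"
proof
  define v' where "v' = v - (lor u v / lor u u) *\<^sub>R u"
  have N: "lor v' v' < 0"
    unfolding v'_def using ultra_parallel_normal_timelike[OF u v up] .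
  have v'u: "lor v' u = 0"
    unfolding v'_def using u by (simp add: lor_simps lor_sym[of v u])
  define \<sigma> where "\<sigma> = (if v' $ 1 > 0 then 1 else -1 :: real)"
  define e where "e = (\<sigma> / sqrt (- lor v' v')) *\<^sub>R v'"
  define f where "f = (1 / sqrt (lor u u)) *\<^sub>R u"
  have "v' $ 1 \<noteq> 0"
    using timelike_spatial_bound[OF N] by auto
  then show "e $ 1 > 0"
    unfolding e_def \<sigma>_def using N by (auto simp: zero_less_mult_iff mult_less_0_iff)
  have \<sigma>: "\<sigma> * \<sigma> = 1"
    unfolding \<sigma>_def by simp
  then show "lorentz_frame e f"
    unfolding lorentz_frame_def e_def f_def using N u v'u
    by (simp add: lor_simps power2_eq_square[symmetric] mult.assoc[symmetric])
  have "v' = (\<sigma> * sqrt (- lor v' v')) *\<^sub>R e"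
    unfolding e_def using N \<sigma> by (simp add: mult.assoc[symmetric])
  moreover have "u = sqrt (lor u u) *\<^sub>R f"
    unfolding f_def using u by simp
  moreover have "v = v' + (lor u v / lor u u) *\<^sub>R u"
    unfolding v'_def by simp
  ultimately have "u \<in> span {e, f}" "v \<in> span {e, f}"
    by (metis span_add span_scale span_base insertI1 insertI2)+
  moreover have "e \<in> span {u, v}" "f \<in> span {u, v}"
    unfolding e_def f_def v'_def by (intro span_scale span_diff span_base; simp)+
  ultimately show "span {e, f} = span {u, v}"
    by (intro subset_antisym span_minimal) auto
qed


lemma refl_refl_fixed_span_imp_0:
  assumes u: "lor u u > 0" and v: "lor v v > 0"
    and up: "ultra_parallel (hyperplane u) (hyperplane v)"
    and "z \<in> span {u, v}" "refl u (refl v z) = z"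
  shows "z = 0"
proof -
  obtain e f where frame: "lorentz_frame e f" and W: "span {e, f} = span {u, v}"
    using ultra_parallel_lorentz_frame[OF u v up] by blast
  have "lor u u \<noteq> 0" "lor v v \<noteq> 0"
    using u v by simp_all
  note orth = refl_refl_fixed_imp_orthogonal[OF this ultra_parallel_normals_independent(2)[OF u v up] assms(5)]
  have zuv: "lor z s = 0" if "s \<in> {u, v}" for s
    using orth that by blast
  have "e \<in> span {u, v}" "f \<in> span {u, v}"
    unfolding W[symmetric] by (simp_all add: span_base)
  then have "lor z e = 0" "lor z f = 0"
    by (meson lor_span_eq_0 zuv)+
  moreover have "z \<in> span {e, f}"
    unfolding W by (rule assms(4))
  ultimately show ?thesis
    using lorentz_frame_span_eq_0[OF frame] by blast
qed

lemma lorentz_frame_orthogonal_decomp: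
  assumes "lorentz_frame e f"
  obtains a b y where "x = a *\<^sub>R e + b *\<^sub>R f + y" "lor y e = 0" "lor y f = 0" "lor y y \<ge> 0"
    "lor x x = - a * a + b * b + lor y y"
proof -
  define a where "a = - lor x e"
  define b where "b = lor x f"
  define y where "y = x - (a *\<^sub>R e + b *\<^sub>R f)"
  have ye: "lor y e = 0" "lor e y = 0" and yf: "lor y f = 0" "lor f y = 0"
    unfolding y_def a_def b_def using assms
    by (simp_all add: lorentz_frame_def lor_simps lor_sym[of f e] lor_sym[of e x] lor_sym[of f x])
  have "lor y y \<ge> 0"
    using lor_self_ge_0_if_lor_orthogonal_timelike[of e y] assms ye by (simp add: lorentz_frame_def)
  have x: "x = a *\<^sub>R e + b *\<^sub>R f + y"
    unfolding y_def by simp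
  have "lor x x = lor (a *\<^sub>R e + b *\<^sub>R f) (a *\<^sub>R e + b *\<^sub>R f) + lor y y"
    by (subst (1 2) x) (simp add: lor_simps ye yf)
  then show ?thesis
    using that[OF x ye(1) yf(1) \<open>lor y y \<ge> 0\<close>] lor_lorentz_frame[OF assms, of a b a b] by simp
qed

lemma dim_2_subspaces_inter_parallel:
  fixes V W :: "'a::euclidean_space set"
  assumes "subspace V" "subspace W" "dim V = 2" "dim W \<le> 2" "V \<noteq> W"
    and "z \<in> V \<inter> W" "z \<noteq> 0" "y \<in> V \<inter> W"
  obtains c where "y = c *\<^sub>R z"
proof -
  have "\<not> V \<subseteq> W"
    using subspace_dim_equal[OF assms(1,2)] assms(3-5) by fastforce
  moreover have "span (V \<inter> W) = V \<inter> W" "span V = V"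
    using assms(1,2) by (simp_all add: span_eq_iff subspace_inter)
  ultimately have "span (V \<inter> W) \<subset> span V"
    by blast
  then have "dim (V \<inter> W) \<le> 1"
    using dim_psubset[of "V \<inter> W" V] assms(3) by simp
  then show ?thesis
    using dim_le_1_parallel[OF subspace_inter[OF assms(1,2)] _ assms(6-8)] that by blast
qed

lemma lor_eigenvector_null:
  assumes M: "\<And>x y. lor (M x) (M y) = lor x y" and c: "M z = c *\<^sub>R z" "c \<noteq> 1" "c \<noteq> -1"
  shows "lor z z = 0" and "M w = w + z \<Longrightarrow> lor w z = 0"
proof -
  have "c * c \<noteq> 1"
    using c(2,3) by (metis mult_cancel_left1 square_eq_1_iff)
  moreover have "lor z z = (c * c) * lor z z"
    using M[of z z] c(1) by (simp add: lor_simps)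
  ultimately show zz: "lor z z = 0"
    by (metis mult_cancel_right1)
  assume "M w = w + z"
  then have "lor w z = lor (w + z) (c *\<^sub>R z)"
    using M[of w z] c(1) by simp
  also have "\<dots> = c * lor w z"
    using zz by (simp add: lor_simps)
  finally show "lor w z = 0"
    using c(2) by (metis mult_cancel_right1 mult.commute)
qed

text \<open>The plane \<open>span {e, f}\<close> is the only \<open>M\<close>-invariant plane containing a timelike vector:
  otherwise \<open>M x - x\<close> would be an eigenvector, which must be null, and the component of \<open>x\<close> in
  \<open>span {e, f}\<close> would be orthogonal to it and hence null as well.\<close>

lemma lorentz_invariant_plane_eq:
  assumes frame: "lorentz_frame e f"
    and M: "linear M" "\<And>x y. lor (M x) (M y) = lor x y"
    and MW: "\<And>w. w \<in> span {e, f} \<Longrightarrow> M w \<in> span {e, f}"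
    and perp: "\<And>y. lor y e = 0 \<Longrightarrow> lor y f = 0 \<Longrightarrow> M y = y"
    and fixed: "\<And>z. z \<in> span {e, f} \<Longrightarrow> M z = z \<Longrightarrow> z = 0"
    and neg: "\<And>z. M z = - z \<Longrightarrow> z = 0"
    and V: "subspace V" "dim V = 2" "\<And>x. x \<in> V \<Longrightarrow> M x \<in> V"
    and x: "x \<in> V" "lor x x < 0"
  shows "V = span {e, f}"
proof (rule ccontr)
  assume "V \<noteq> span {e, f}"
  define W where "W = span {e, f}"
  obtain a b y where xy: "x = a *\<^sub>R e + b *\<^sub>R f + y" "lor y e = 0" "lor y f = 0" "lor y y \<ge> 0"
    "lor x x = - a * a + b * b + lor y y"
    using lorentz_frame_orthogonal_decomp[OF frame] by blast
  define w where "w = a *\<^sub>R e + b *\<^sub>R f"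
  have "w \<in> W"
    unfolding w_def W_def by (rule span2_lincomb)
  have ww: "lor w w < 0"
    unfolding w_def lor_lorentz_frame[OF frame] using xy(4,5) x(2) by simp
  define z where "z = M w - w"
  have "z = M x - x"
    unfolding z_def xy(1) w_def[symmetric] using perp[OF xy(2,3)] linear_add[OF M(1)] by simp
  then have "z \<in> V"
    using V x by (simp add: subspace_diff)
  have "z \<in> W"
    unfolding z_def using MW \<open>w \<in> W\<close> W_def by (simp add: span_diff)
  have "z \<noteq> 0"
    using fixed[of w] \<open>w \<in> W\<close> ww unfolding z_def W_def by auto
  have "dim W \<le> card {e, f}"
    unfolding W_def by (rule dim_le_card) auto
  also have "\<dots> \<le> 2"
    by (simp add: card_insert_if)
  finally obtain c where c: "M z = c *\<^sub>R z"
    using dim_2_subspaces_inter_parallel[OF V(1) _ V(2) _ _ _ \<open>z \<noteq> 0\<close>, of W "M z"]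
      \<open>V \<noteq> span {e, f}\<close> V(3) MW \<open>z \<in> V\<close> \<open>z \<in> W\<close> W_def by auto
  moreover have "c \<noteq> 1" "c \<noteq> -1"
    using fixed[of z] neg[of z] c \<open>z \<in> W\<close> \<open>z \<noteq> 0\<close> W_def by auto
  moreover have "M w = w + z"
    unfolding z_def by simp
  ultimately have "lor z z = 0" "lor w z = 0"
    using lor_eigenvector_null[OF M(2)] by blast+
  then have "lor w w = 0"
    using lorentz_frame_null_orthogonal[OF frame] \<open>z \<in> W\<close> \<open>z \<noteq> 0\<close> \<open>w \<in> W\<close> W_def by blast
  with ww show False
    by simp
qed

lemma axis_of_refl_refl:
  assumes u: "lor u u > 0" and v: "lor v v > 0"
    and up: "ultra_parallel (hyperplane u) (hyperplane v)"
    and A: "\<forall>x\<in>H4. A x = refl u (refl v x)" and L: "axis_of A L"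
  shows "L = H4 \<inter> span {u, v}"
proof -
  obtain e f where frame: "lorentz_frame e f" and W: "span {e, f} = span {u, v}"
    using ultra_parallel_lorentz_frame[OF u v up] by blast
  define M where "M x = refl u (refl v x)" for x
  obtain V where V: "subspace V" "dim V = 1 + 1" "L = H4 \<inter> V" "L \<noteq> {}"
    using L unfolding axis_of_def geodesic_def tg_subspace_def by blast
  then obtain x where x: "x \<in> H4" "x \<in> V"
    by blast
  have "M ` L = L"
    using L A V(3) unfolding axis_of_def M_def by (auto simp: image_def)
  then have "M ` V = V"
    using span_linear_image[OF linear_refl_refl, of u v L] span_H4_inter[OF V(1) x] V(3)
    unfolding M_def by simp
  have "V = span {e, f}"
  proof (rule lorentz_invariant_plane_eq[OF frame _ _ _ _ _ _ V(1) _ _ x(2)])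
    show "linear M"
      unfolding M_def by (rule linear_refl_refl)
    show "lor (M x) (M y) = lor x y" for x y
      unfolding M_def by (simp add: lor_refl)
    have "u \<in> span {e, f}" "v \<in> span {e, f}"
      unfolding W by (simp_all add: span_base)
    then show "M w \<in> span {e, f}" if "w \<in> span {e, f}" for w
      using that unfolding M_def refl_def[of u] refl_def[of v] by (intro span_diff span_scale)
    show "M y = y" if "lor y e = 0" "lor y f = 0" for y
    proof -
      have "u \<in> span {e, f}" "v \<in> span {e, f}"
        unfolding W by (simp_all add: span_base)
      then have "lor y u = 0" "lor y v = 0"
        using lor_span_eq_0[of "{e, f}" y] that by auto
      then show ?thesis
        unfolding M_def by (simp add: refl_fixed)
    qed
    show "z = 0" if "z \<in> span {e, f}" "M z = z" for z
      using refl_refl_fixed_span_imp_0[OF u v up] that W by (simp add: M_def)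
    show "z = 0" if "M z = - z" for z
      using refl_refl_eq_uminus_imp_0[OF _ _ ultra_parallel_normals_independent(1)[OF u v up]] u v that
      by (simp add: M_def)
    show "M x \<in> V" if "x \<in> V" for x
      using that \<open>M ` V = V\<close> by blast
    show "lor x x < 0"
      using x(1) by (simp add: H4_def)
    show "dim V = 2"
      using V(2) by simp
  qed
  then show "L = H4 \<inter> span {u, v}"
    using V(3) W by simp
qed

text \<open>\<open>A\<close> is the product of the reflections in two spacelike vectors of \<open>W\<close> and has no nonzero
  fixed vector in \<open>W\<close>; for a Lorentzian plane \<open>W\<close> this is a translation along the geodesic
  \<open>H4 \<inter> W\<close>.\<close>

definition translates_along :: "(pt \<Rightarrow> pt) \<Rightarrow> pt set \<Rightarrow> bool" where
  "translates_along A W \<longleftrightarrow> (\<exists>u v. u \<in> W \<and> v \<in> W \<and> lor u u > 0 \<and> lor v v > 0 \<and>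
    (\<forall>x\<in>H4. A x = refl u (refl v x)) \<and> (\<forall>z\<in>W. refl u (refl v z) = z \<longrightarrow> z = 0))"

text \<open>A null pair spans a geodesic; the normalisation \<open>lor a a' = -2\<close> makes the points
  \<open>(X a + a' / X) / 2\<close>, \<open>X > 0\<close>, exactly the points of that geodesic, with unit tangents
  \<open>(X a - a' / X) / 2\<close>.\<close>

definition null_pair :: "pt \<Rightarrow> pt \<Rightarrow> bool" where
  "null_pair a a' \<longleftrightarrow> lor a a = 0 \<and> lor a' a' = 0 \<and> a $ 1 > 0 \<and> a' $ 1 > 0 \<and> lor a a' = -2"

definition geo_point :: "real \<Rightarrow> pt \<Rightarrow> pt \<Rightarrow> pt" where
  "geo_point X a a' = (1/2) *\<^sub>R (X *\<^sub>R a + (1/X) *\<^sub>R a')"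

definition geo_tangent :: "real \<Rightarrow> pt \<Rightarrow> pt \<Rightarrow> pt" where
  "geo_tangent X a a' = (1/2) *\<^sub>R (X *\<^sub>R a - (1/X) *\<^sub>R a')"

lemma null_pair_commute: "null_pair a a' \<longleftrightarrow> null_pair a' a"
  by (auto simp: null_pair_def lor_sym)

lemma lorentz_frame_null_pair:
  assumes "lorentz_frame e f" "e $ 1 > 0"
  shows "null_pair (e + f) (e - f)" "span {e + f, e - f} = span {e, f}"
proof -
  have ee: "lor e e = -1" and eH: "e \<in> H4"
    using assms by (simp_all add: lorentz_frame_def H4_def)
  have l: "lor (e + f) (e + f) = 0" "lor (e - f) (e - f) = 0" "lor (e + f) (e - f) = -2"
    "lor e (e + f) = -1" "lor e (e - f) = -1"
    using assms(1) by (simp_all add: lorentz_frame_def lor_simps lor_sym[of f e])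
  moreover have "(e + f) $ 1 > 0" "(e - f) $ 1 > 0"
    by (rule H4_lor_neg_future[OF eH]; use l in simp)+
  ultimately show "null_pair (e + f) (e - f)"
    unfolding null_pair_def by blast
  have "e = (1/2) *\<^sub>R (e + f) + (1/2) *\<^sub>R (e - f)" "f = (1/2) *\<^sub>R (e + f) + (-1/2) *\<^sub>R (e - f)"
    by (simp_all add: algebra_simps scaleR_2[symmetric])
  then have "e \<in> span {e + f, e - f}" "f \<in> span {e + f, e - f}"
    by (metis span2_lincomb)+
  moreover have "e + f \<in> span {e, f}" "e - f \<in> span {e, f}"
    by (auto intro: span_add span_diff span_base)
  ultimately show "span {e + f, e - f} = span {e, f}"
    by (intro subset_antisym span_minimal) auto
qed

lemma pure_hyperbolic_axis:
  assumes "pure_hyperbolic A" "axis_of A L"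
  obtains a a' where "null_pair a a'" "L = H4 \<inter> span {a, a'}" "translates_along A (span {a, a'})"
proof -
  obtain u v where u: "lor u u > 0" and v: "lor v v > 0"
    and up: "ultra_parallel (hyperplane u) (hyperplane v)" and A: "\<forall>x\<in>H4. A x = refl u (refl v x)"
    using assms(1) unfolding pure_hyperbolic_def by blast
  obtain e f where "lorentz_frame e f" "e $ 1 > 0" "span {e, f} = span {u, v}"
    using ultra_parallel_lorentz_frame[OF u v up] by blast
  then have ef: "null_pair (e + f) (e - f)" "span {e + f, e - f} = span {u, v}"
    using lorentz_frame_null_pair by auto
  have "u \<in> span {u, v}" "v \<in> span {u, v}"
    by (simp_all add: span_base)
  then have "translates_along A (span {u, v})"
    unfolding translates_along_def using u v A refl_refl_fixed_span_imp_0[OF u v up] by blast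
  then show ?thesis
    using that[OF ef(1)] axis_of_refl_refl[OF u v up A assms(2)] unfolding ef(2) by blast
qed

subsection \<open>The common perpendicular of ultra-parallel axes\<close>

lemma ultra_parallel_disjoint:
  assumes "ultra_parallel S T" "x \<in> S" "x \<in> H4"
  shows "x \<notin> T"
proof
  assume "x \<in> T"
  obtain e where "e > 0" "hdist x x \<ge> e"
    using assms(1,2) \<open>x \<in> T\<close> unfolding ultra_parallel_def by blast
  moreover have "hdist x x = 0"
    using assms(3) by (simp add: hdist_def H4_def)
  ultimately show False
    by simp
qed

lemma geo_point_frame:
  assumes "null_pair a a'" "X > 0"
  shows "lorentz_frame (geo_point X a a') (geo_tangent X a a')" "geo_point X a a' \<in> H4"
    "geo_point X a a' \<in> span {a, a'}" "geo_tangent X a a' \<in> span {a, a'}"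
    "span {geo_point X a a', geo_tangent X a a'} = span {a, a'}"
proof -
  show frame: "lorentz_frame (geo_point X a a') (geo_tangent X a a')"
    using assms unfolding lorentz_frame_def null_pair_def geo_point_def geo_tangent_def
    by (simp add: lor_simps lor_sym[of a' a] field_simps)
  have "geo_point X a a' $ 1 > 0"
    using assms unfolding null_pair_def geo_point_def by (simp add: add_pos_pos)
  then show "geo_point X a a' \<in> H4"
    using frame by (simp add: lorentz_frame_def H4_def)
  have "geo_point X a a' = (X/2) *\<^sub>R a + (1/(2*X)) *\<^sub>R a'"
    "geo_tangent X a a' = (X/2) *\<^sub>R a + (-(1/(2*X))) *\<^sub>R a'"
    by (simp_all add: geo_point_def geo_tangent_def algebra_simps)
  then show "geo_point X a a' \<in> span {a, a'}" "geo_tangent X a a' \<in> span {a, a'}"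
    by (metis span2_lincomb)+
  have "a = (1/X) *\<^sub>R geo_point X a a' + (1/X) *\<^sub>R geo_tangent X a a'"
    "a' = X *\<^sub>R geo_point X a a' + (- X) *\<^sub>R geo_tangent X a a'"
    using assms(2) by (simp_all add: geo_point_def geo_tangent_def algebra_simps scaleR_2[symmetric])
  then have "a \<in> span {geo_point X a a', geo_tangent X a a'}"
    "a' \<in> span {geo_point X a a', geo_tangent X a a'}"
    by (metis span2_lincomb)+
  with \<open>geo_point X a a' \<in> span {a, a'}\<close> \<open>geo_tangent X a a' \<in> span {a, a'}\<close>
  show "span {geo_point X a a', geo_tangent X a a'} = span {a, a'}"
    by (intro subset_antisym span_minimal) auto
qed

lemma lor_geo_point_common_end:
  assumes na: "null_pair a a'" and nb: "null_pair b b'" and b: "b = k *\<^sub>R a" "k > 0" and "X > 0"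
  shows "lor (geo_point X a a') (geo_point (X / k) b b') = - 1 + lor a' b' * k / (4 * X\<^sup>2)"
proof -
  have "lor a b = 0" "lor a b' = -2 / k" "lor a' b = - 2 * k"
    using na nb b unfolding null_pair_def b(1) by (simp_all add: lor_simps lor_sym[of a' a] field_simps)
  moreover have "lor (geo_point X a a') (geo_point (X / k) b b') = (1/4) * (X * (X / k) * lor a b
      + (X / (X / k)) * lor a b' + ((X / k) / X) * lor a' b + lor a' b' / (X * (X / k)))"
    unfolding geo_point_def using assms(4,5) by (simp add: lor_simps field_simps)
  ultimately show ?thesis
    using assms(4,5) by (simp add: field_simps power2_eq_square)
qed

text \<open>If \<open>a\<close> and \<open>b\<close> were orthogonal they would be proportional, i.e. the two geodesics would
  share an ideal endpoint, and by the previous lemma their points far out towards it come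
  arbitrarily close.\<close>

lemma ultra_parallel_null_lor_neg:
  assumes na: "null_pair a a'" and nb: "null_pair b b'"
    and up: "ultra_parallel (H4 \<inter> span {a, a'}) (H4 \<inter> span {b, b'})"
  shows "lor a b < 0"
proof -
  have "lor a b \<le> 0"
    using lor_future_le_0[of a b] na nb by (simp add: null_pair_def)
  moreover have "lor a b \<noteq> 0"
  proof
    assume ab: "lor a b = 0"
    obtain e where e: "e > 0"
      and d: "\<And>x y. x \<in> H4 \<inter> span {a, a'} \<Longrightarrow> y \<in> H4 \<inter> span {b, b'} \<Longrightarrow> hdist x y \<ge> e"
      using up unfolding ultra_parallel_def by blast
    define k where "k = b $ 1 / a $ 1"
    have k: "k > 0" "b = k *\<^sub>R a"
      unfolding k_def using na nb null_future_parallel[of a b] ab by (simp_all add: null_pair_def)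
    define D where "D = - lor a' b'"
    have D: "D \<ge> 0"
      unfolding D_def using lor_future_le_0[of a' b'] na nb by (simp add: null_pair_def)
    define c where "c = cosh e - 1"
    have c: "c > 0"
      unfolding c_def using cosh_real_nonneg_less_iff[of 0 e] e by simp
    define X where "X = sqrt (k * D / c + 1)"
    have "k * D / c \<ge> 0"
      using k D c by simp
    then have X: "X > 0" "X\<^sup>2 = k * D / c + 1"
      unfolding X_def by simp_all
    define p where "p = geo_point X a a'"
    define q where "q = geo_point (X / k) b b'"
    have p: "p \<in> H4 \<inter> span {a, a'}" and q: "q \<in> H4 \<inter> span {b, b'}"
      unfolding p_def q_def using geo_point_frame[OF na X(1)] geo_point_frame[OF nb, of "X / k"] X(1) k
      by simp_all
    have "D * k < 4 * c * X\<^sup>2"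
      unfolding X(2) using c k D by (simp add: field_simps) (intro add_pos_nonneg mult_nonneg_nonneg; simp)
    moreover have "4 * X\<^sup>2 > 0"
      using X(1) by simp
    ultimately have "D * k / (4 * X\<^sup>2) < c"
      by (simp add: pos_divide_less_eq algebra_simps)
    then have "lor p q > - cosh e"
      using lor_geo_point_common_end[OF na nb k(2,1) X(1)] unfolding p_def q_def c_def D_def by simp
    moreover have "lor p q \<le> - cosh e"
      using hdist_ge_imp_lor_le[OF _ _ d[OF p q] e] p q by simp
    ultimately show False
      by simp
  qed
  ultimately show ?thesis
    by simp
qed

text \<open>Rescaling both null pairs so that the four Lorentz products are balanced makes the
  tangent at each point orthogonal to the point on the other axis.\<close>

lemma common_perpendicular_parameters:
  assumes "lor a b < 0" "lor a b' < 0" "lor a' b < 0" "lor a' b' < 0"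
  obtains X Y where "X > 0" "Y > 0" "lor (geo_tangent X a a') (geo_point Y b b') = 0"
    "lor (geo_point X a a') (geo_tangent Y b b') = 0"
proof
  define P where "P = sqrt (lor a' b' / lor a b)"
  define Q where "Q = sqrt (lor a' b / lor a b')"
  have P: "P > 0" "P\<^sup>2 * lor a b = lor a' b'" and Q: "Q > 0" "Q\<^sup>2 * lor a b' = lor a' b"
    unfolding P_def Q_def using assms by (simp_all add: zero_less_divide_iff zero_le_divide_iff)
  define X where "X = sqrt (P * Q)"
  define Y where "Y = sqrt (P / Q)"
  show X: "X > 0" and Y: "Y > 0"
    unfolding X_def Y_def using P Q by simp_all
  have "X * Y = P" "X / Y = Q"
    unfolding X_def Y_def using P Q by (simp_all add: real_sqrt_mult[symmetric] real_sqrt_divide[symmetric])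
  then have e1: "X * Y * lor a b = lor a' b' / (X * Y)"
    and e2: "(X / Y) * lor a b' = (Y / X) * lor a' b"
    using P Q X Y by (simp_all add: field_simps power2_eq_square)
  have "lor (geo_tangent X a a') (geo_point Y b b') = (1/4) * ((X * Y * lor a b - lor a' b' / (X * Y))
      + ((X / Y) * lor a b' - (Y / X) * lor a' b))"
    unfolding geo_tangent_def geo_point_def using X Y by (simp add: lor_simps field_simps)
  then show "lor (geo_tangent X a a') (geo_point Y b b') = 0"
    using e1 e2 by simp
  have "lor (geo_point X a a') (geo_tangent Y b b') = (1/4) * ((X * Y * lor a b - lor a' b' / (X * Y))
      - ((X / Y) * lor a b' - (Y / X) * lor a' b))"
    unfolding geo_tangent_def geo_point_def using X Y by (simp add: lor_simps field_simps)
  then show "lor (geo_point X a a') (geo_tangent Y b b') = 0"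
    using e1 e2 by simp
qed

lemma common_perpendicular:
  assumes na: "null_pair a a'" and nb: "null_pair b b'"
    and up: "ultra_parallel (H4 \<inter> span {a, a'}) (H4 \<inter> span {b, b'})"
  obtains p t q s where "lorentz_frame p t" "lorentz_frame q s" "p \<in> H4" "q \<in> H4" "p \<noteq> q"
    "lor t q = 0" "lor p s = 0" "span {p, t} = span {a, a'}" "span {q, s} = span {b, b'}"
proof -
  have "lor a b < 0" "lor a b' < 0" "lor a' b < 0" "lor a' b' < 0"
    using ultra_parallel_null_lor_neg[of a a' b b'] ultra_parallel_null_lor_neg[of a a' b' b]
      ultra_parallel_null_lor_neg[of a' a b b'] ultra_parallel_null_lor_neg[of a' a b' b]
      na nb up by (simp_all add: null_pair_commute insert_commute)
  then obtain X Y where XY: "X > 0" "Y > 0" "lor (geo_tangent X a a') (geo_point Y b b') = 0"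
    "lor (geo_point X a a') (geo_tangent Y b b') = 0"
    by (rule common_perpendicular_parameters)
  note pt = geo_point_frame[OF na XY(1)] and qs = geo_point_frame[OF nb XY(2)]
  have "geo_point X a a' \<notin> H4 \<inter> span {b, b'}"
    using ultra_parallel_disjoint[OF up] pt(2,3) by blast
  then have "geo_point X a a' \<noteq> geo_point Y b b'"
    using qs(2,3) by auto
  then show ?thesis
    using that[OF pt(1) qs(1) pt(2) qs(2) _ XY(3,4) pt(5) qs(5)] by blast
qed

lemma orthogonal_to_geodesic:
  assumes "lorentz_frame p t" "p \<in> H4" "subspace U" "p \<in> U" "\<And>w. w \<in> U \<Longrightarrow> lor t w = 0"
  shows "orthogonal_to (H4 \<inter> U) (H4 \<inter> span {p, t})"
  unfolding orthogonal_to_def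
proof (intro bexI[of _ p] ballI impI)
  fix v w
  assume v: "v \<in> span (H4 \<inter> span {p, t})" and w: "w \<in> span (H4 \<inter> U)" and "lor v p = 0"
  have "v \<in> span {p, t}"
    using v by (metis inf.cobounded2 span_mono span_span subsetD)
  then obtain \<alpha> \<beta> where v: "v = \<alpha> *\<^sub>R p + \<beta> *\<^sub>R t"
    by (rule span2_obtain)
  have "lor v p = - \<alpha>"
    unfolding v using assms(1) by (simp add: lorentz_frame_def lor_simps lor_sym[of t p])
  then have "v = \<beta> *\<^sub>R t"
    using \<open>lor v p = 0\<close> v by simp
  moreover have "w \<in> U"
    using w span_minimal[of "H4 \<inter> U" U] assms(3) by blast
  ultimately show "lor v w = 0"
    using assms(5) by (simp add: lor_simps)
qed (use assms in \<open>auto intro: span_base\<close>)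

lemma independent_H4_pair_normal:
  assumes "p \<in> H4" "q \<in> H4" "p \<noteq> q" "n \<noteq> 0" "lor n p = 0" "lor n q = 0"
  shows "independent {p, q, n}"
proof -
  have pp: "lor p p = -1" and qq: "lor q q = -1"
    using assms(1,2) by (simp_all add: H4_def)
  have nn: "lor n n > 0"
    using spacelike_if_lor_orthogonal_timelike[of p n] pp assms(4,5) by (simp add: lor_sym[of p n])
  show ?thesis
  proof (rule independent_insertI)
    show "independent {q, n}"
    proof (rule independent_insertI)
      show "independent {n}"
        using assms(4) by simp
      show "q \<notin> span {n}"
      proof
        assume "q \<in> span {n}"
        then have "lor q q = 0"
          using lor_span_eq_0[of "{n}" q q] assms(6) by (simp add: lor_sym[of q n])
        with qq show False
          by simp
      qed
    qed
    show "p \<notin> span {q, n}"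
    proof
      assume "p \<in> span {q, n}"
      then obtain \<alpha> \<beta> where p: "p = \<alpha> *\<^sub>R q + \<beta> *\<^sub>R n"
        by (rule span2_obtain)
      have "lor n p = \<beta> * lor n n"
        unfolding p using assms(6) by (simp add: lor_simps)
      then have "p = \<alpha> *\<^sub>R q"
        using p assms(5) nn by simp
      then have "\<alpha> * \<alpha> = 1" "p $ 1 = \<alpha> * q $ 1"
        using pp qq by (simp_all add: lor_simps)
      then show False
        using \<open>p = \<alpha> *\<^sub>R q\<close> assms(1-3) by (auto simp: square_eq_1_iff H4_def mult_less_0_iff)
    qed
  qed
qed

lemma exists_plane_orthogonal_to_geodesics:
  assumes pt: "lorentz_frame p t" and qs: "lorentz_frame q s" and "p \<in> H4" "q \<in> H4" "p \<noteq> q"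
    and "lor t q = 0" "lor p s = 0"
  shows "\<exists>P. plane P \<and> orthogonal_to P (H4 \<inter> span {p, t}) \<and> orthogonal_to P (H4 \<inter> span {q, s})"
proof -
  obtain n where n: "n \<noteq> 0" "lor n p = 0" "lor n t = 0" "lor n q = 0" "lor n s = 0"
    using exists_lor_orthogonal_4 by blast
  have "lor p p = -1" "lor q q = -1" "lor n n > 0"
    using assms(3,4) spacelike_if_lor_orthogonal_timelike[of p n] n(1,2)
    by (simp_all add: H4_def lor_sym[of p n])
  then have "p \<noteq> n" "q \<noteq> n"
    by auto
  define U where "U = span {p, q, n}"
  have "independent {p, q, n}"
    using independent_H4_pair_normal[OF assms(3-5) n(1,2,4)] .
  moreover have "card {p, q, n} = 3"
    using \<open>p \<noteq> q\<close> \<open>p \<noteq> n\<close> \<open>q \<noteq> n\<close> by simp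
  ultimately have "dim U = 2 + 1"
    unfolding U_def by (simp add: dim_eq_card_independent)
  then have "plane (H4 \<inter> U)"
    unfolding plane_def tg_subspace_def using \<open>p \<in> H4\<close> by (intro exI[of _ U]) (auto simp: U_def span_base)
  have "lor t p = 0" "lor t n = 0" "lor s q = 0" "lor s p = 0" "lor s n = 0"
    using pt qs n(3,5) assms(7) by (simp_all add: lorentz_frame_def lor_sym)
  then have "lor t w = 0" "lor s w = 0" if "w \<in> U" for w
    using that lor_span_eq_0[of "{p, q, n}" t w] lor_span_eq_0[of "{p, q, n}" s w] assms(6)
    unfolding U_def by auto
  then have "orthogonal_to (H4 \<inter> U) (H4 \<inter> span {p, t})" "orthogonal_to (H4 \<inter> U) (H4 \<inter> span {q, s})"
    using orthogonal_to_geodesic[OF pt \<open>p \<in> H4\<close>] orthogonal_to_geodesic[OF qs \<open>q \<in> H4\<close>]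
    by (auto simp: U_def span_base)
  with \<open>plane (H4 \<inter> U)\<close> show ?thesis
    by blast
qed

subsection \<open>Linking through a common perpendicular\<close>

lemma refl_lorentz_frame:
  assumes frame: "lorentz_frame p t" and "u \<in> span {p, t}" "lor u u > 0"
  obtains c s where "c\<^sup>2 - s\<^sup>2 = 1" "refl u p = c *\<^sub>R p + s *\<^sub>R t" "refl u t = (- s) *\<^sub>R p + (- c) *\<^sub>R t"
proof -
  obtain \<alpha> \<beta> where u: "u = \<alpha> *\<^sub>R p + \<beta> *\<^sub>R t"
    using span2_obtain[OF assms(2)] .
  define N where "N = lor u u"
  have N: "N = - \<alpha> * \<alpha> + \<beta> * \<beta>" "N > 0"
    unfolding N_def u using lor_lorentz_frame[OF frame] assms(3) u by simp_all
  have "lor p u = - \<alpha>" "lor t u = \<beta>"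
    unfolding u using frame by (simp_all add: lorentz_frame_def lor_simps lor_sym[of t p])
  then have rp: "refl u p = p + (2 * \<alpha> / N) *\<^sub>R u" and rt: "refl u t = t - (2 * \<beta> / N) *\<^sub>R u"
    unfolding refl_def N_def by simp_all
  define c where "c = 1 + (2 * \<alpha> / N) * \<alpha>"
  define s where "s = (2 * \<alpha> / N) * \<beta>"
  have "c\<^sup>2 - s\<^sup>2 = ((N + 2 * \<alpha> * \<alpha>)\<^sup>2 - 4 * \<alpha> * \<alpha> * (\<beta> * \<beta>)) / N\<^sup>2"
    unfolding c_def s_def using N by (simp add: field_simps power2_eq_square)
  also have "\<dots> = ((N + 2 * \<alpha> * \<alpha>)\<^sup>2 - 4 * \<alpha> * \<alpha> * (N + \<alpha> * \<alpha>)) / N\<^sup>2"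
    using N(1) by simp
  also have "(N + 2 * \<alpha> * \<alpha>)\<^sup>2 - 4 * \<alpha> * \<alpha> * (N + \<alpha> * \<alpha>) = N\<^sup>2"
    by (simp add: power2_eq_square algebra_simps)
  finally have "c\<^sup>2 - s\<^sup>2 = 1"
    using N(2) by simp
  moreover have "refl u p = c *\<^sub>R p + s *\<^sub>R t"
    using rp unfolding u c_def s_def by (simp add: algebra_simps)
  moreover have "refl u t = (- s) *\<^sub>R p + (- c) *\<^sub>R t"
  proof -
    have cc: "1 - (2 * \<beta> / N) * \<beta> = - c"
      unfolding c_def using N(2) by (simp add: field_simps) (simp add: N(1) algebra_simps)
    have "refl u t = (- ((2 * \<beta> / N) * \<alpha>)) *\<^sub>R p + (1 - (2 * \<beta> / N) * \<beta>) *\<^sub>R t"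
      using rt unfolding u by (simp add: algebra_simps)
    then show ?thesis
      unfolding cc s_def by (simp add: mult.commute)
  qed
  ultimately show ?thesis
    using that by blast
qed

lemma refl_refl_lorentz_frame:
  assumes frame: "lorentz_frame p t" and "u \<in> span {p, t}" "lor u u > 0"
    and "v \<in> span {p, t}" "lor v v > 0"
  obtains C D where "C\<^sup>2 - D\<^sup>2 = 1"
    "\<And>a b. refl u (refl v (a *\<^sub>R p + b *\<^sub>R t)) = (a * C + b * D) *\<^sub>R p + (a * D + b * C) *\<^sub>R t"
proof -
  obtain c1 s1 where 1: "c1\<^sup>2 - s1\<^sup>2 = 1" "refl u p = c1 *\<^sub>R p + s1 *\<^sub>R t"
    "refl u t = (- s1) *\<^sub>R p + (- c1) *\<^sub>R t"
    using refl_lorentz_frame[OF frame assms(2,3)] .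
  obtain c2 s2 where 2: "c2\<^sup>2 - s2\<^sup>2 = 1" "refl v p = c2 *\<^sub>R p + s2 *\<^sub>R t"
    "refl v t = (- s2) *\<^sub>R p + (- c2) *\<^sub>R t"
    using refl_lorentz_frame[OF frame assms(4,5)] .
  have refl_lincomb: "refl w (a *\<^sub>R p + b *\<^sub>R t) = (a * c - b * s) *\<^sub>R p + (a * s - b * c) *\<^sub>R t"
    if "refl w p = c *\<^sub>R p + s *\<^sub>R t" "refl w t = (- s) *\<^sub>R p + (- c) *\<^sub>R t" for w a b c s
  proof -
    have "refl w (a *\<^sub>R p + b *\<^sub>R t) = a *\<^sub>R (c *\<^sub>R p + s *\<^sub>R t) + b *\<^sub>R ((- s) *\<^sub>R p + (- c) *\<^sub>R t)"
      by (simp only: refl_add refl_scaleR that)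
    then show ?thesis
      by (simp add: scaleR_add_right algebra_simps)
  qed
  define C where "C = c1 * c2 - s1 * s2"
  define D where "D = c2 * s1 - s2 * c1"
  have "C\<^sup>2 - D\<^sup>2 = (c1\<^sup>2 - s1\<^sup>2) * (c2\<^sup>2 - s2\<^sup>2)"
    unfolding C_def D_def by (simp add: power2_eq_square algebra_simps)
  moreover have "refl u (refl v (a *\<^sub>R p + b *\<^sub>R t)) = (a * C + b * D) *\<^sub>R p + (a * D + b * C) *\<^sub>R t"
    for a b
  proof -
    have "refl u (refl v (a *\<^sub>R p + b *\<^sub>R t))
        = ((a * c2 - b * s2) * c1 - (a * s2 - b * c2) * s1) *\<^sub>R p
          + ((a * c2 - b * s2) * s1 - (a * s2 - b * c2) * c1) *\<^sub>R t"
      by (simp only: refl_lincomb[OF 2(2,3)] refl_lincomb[OF 1(2,3)])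
    also have "\<dots> = (a * C + b * D) *\<^sub>R p + (a * D + b * C) *\<^sub>R t"
      unfolding C_def D_def by (simp add: algebra_simps)
    finally show ?thesis .
  qed
  ultimately show ?thesis
    using that 1(1) 2(1) by simp
qed

lemma refl_refl_flip_involutive:
  assumes frame: "lorentz_frame p t"
    and "u \<in> span {p, t}" "lor u u > 0" "v \<in> span {p, t}" "lor v v > 0"
    and \<beta>: "linear \<beta>" "\<And>x y. lor (\<beta> x) (\<beta> y) = lor x y" "\<And>x. \<beta> (\<beta> x) = x"
      "\<beta> p = p" "\<beta> t = - t"
  shows "refl u (refl v (\<beta> (refl u (refl v (\<beta> x))))) = x"
proof -
  define M where "M x = refl u (refl v x)" for x
  obtain C D where CD: "C * C - D * D = 1"
    and M: "\<And>a b. M (a *\<^sub>R p + b *\<^sub>R t) = (a * C + b * D) *\<^sub>R p + (a * D + b * C) *\<^sub>R t"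
    using refl_refl_lorentz_frame[OF frame assms(2-5)] unfolding M_def power2_eq_square by blast
  have M_perp: "M y = y" if "lor y p = 0" "lor y t = 0" for y
  proof -
    have "lor y u = 0" "lor y v = 0"
      using lor_span_eq_0[of "{p, t}" y] that assms(2,4) by auto
    then show ?thesis
      unfolding M_def by (simp add: refl_fixed)
  qed
  have M_add: "M (a *\<^sub>R p + b *\<^sub>R t + y) = (a * C + b * D) *\<^sub>R p + (a * D + b * C) *\<^sub>R t + M y" for a b y
    unfolding M_def using M[unfolded M_def] by (simp add: refl_add)
  have \<beta>_add: "\<beta> (a *\<^sub>R p + b *\<^sub>R t + y) = a *\<^sub>R p + (- b) *\<^sub>R t + \<beta> y" for a b y
    using linear_add[OF \<beta>(1)] linear_scale[OF \<beta>(1)] \<beta>(4,5) by simp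
  define a where "a = - lor x p"
  define b where "b = lor x t"
  define y where "y = x - (a *\<^sub>R p + b *\<^sub>R t)"
  have x: "x = a *\<^sub>R p + b *\<^sub>R t + y"
    unfolding y_def by simp
  have "lor y p = 0" "lor y t = 0"
    unfolding y_def a_def b_def using frame by (simp_all add: lorentz_frame_def lor_simps lor_sym[of t p])
  moreover from this have "lor (\<beta> y) p = 0" "lor (\<beta> y) t = 0"
    using \<beta>(2)[of y p] \<beta>(2)[of y t] \<beta>(4,5) by (simp_all add: lor_minus_right)
  ultimately have My: "M y = y" "M (\<beta> y) = \<beta> y"
    using M_perp by auto
  have "M (\<beta> (M (\<beta> x))) = ((a * C + (- b) * D) * C + (- (a * D + (- b) * C)) * D) *\<^sub>R p
      + ((a * C + (- b) * D) * D + (- (a * D + (- b) * C)) * C) *\<^sub>R t + y"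
    unfolding x \<beta>_add M_add My \<beta>(3) ..
  also have "\<dots> = (a * (C * C - D * D)) *\<^sub>R p + (b * (C * C - D * D)) *\<^sub>R t + y"
    by (simp add: algebra_simps)
  also have "\<dots> = x"
    unfolding CD x by simp
  finally show ?thesis
    unfolding M_def .
qed

lemma H4_moved_by_flip:
  assumes pt: "lorentz_frame p t" and "p \<in> H4" and "linear \<beta>" "\<beta> p = p" "\<beta> t = - t"
  shows "\<exists>x\<in>H4. \<beta> x \<noteq> x"
proof
  define x where "x = (5/4) *\<^sub>R p + (3/4) *\<^sub>R t"
  have "lor x x = -1" "lor p x = -5/4" "lor x t = 3/4"
    unfolding x_def using pt by (simp_all add: lorentz_frame_def lor_simps lor_sym[of t p])
  then show "x \<in> H4"
    using H4_lor_neg_future[OF \<open>p \<in> H4\<close>, of x] by (simp add: H4_def)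
  have "\<beta> x = (5/4) *\<^sub>R p - (3/4) *\<^sub>R t"
    unfolding x_def using assms(4,5) by (simp add: linear_add[OF assms(3)] linear_scale[OF assms(3)])
  then have "lor (\<beta> x) t = - 3/4"
    using pt by (simp add: lorentz_frame_def lor_simps lor_sym[of t p])
  with \<open>lor x t = 3/4\<close> show "\<beta> x \<noteq> x"
    by auto
qed

lemma exists_flip_involution:
  assumes pt: "lorentz_frame p t" and qs: "lorentz_frame q s" and "p \<in> H4"
    and "lor t q = 0" "lor p s = 0"
  obtains \<beta> where "linear \<beta>" "\<And>x y. lor (\<beta> x) (\<beta> y) = lor x y" "\<And>x. \<beta> (\<beta> x) = x"
    "isometry \<beta>" "\<exists>x\<in>H4. \<beta> x \<noteq> x" "\<beta> p = p" "\<beta> t = - t" "\<beta> q = q" "\<beta> s = - s"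
proof -
  have pp: "lor p p = -1" and tt: "lor t t = 1"
    using pt by (simp_all add: lorentz_frame_def)
  define m where "m = s - lor s t *\<^sub>R t"
  define \<beta> where "\<beta> x = refl t (refl m x)" for x
  have mt: "lor m t = 0" "lor t m = 0"
    unfolding m_def using tt by (simp_all add: lor_simps lor_sym[of t s])
  have mp: "lor p m = 0"
    unfolding m_def using pt assms(5) by (simp add: lorentz_frame_def lor_simps)
  have mq: "lor q m = 0"
    unfolding m_def using qs assms(4) by (simp add: lorentz_frame_def lor_simps lor_sym[of q t])
  have mm: "lor m m \<ge> 0"
    using lor_self_ge_0_if_lor_orthogonal_timelike[of p m] pp mp by simp
  have "refl m m = - m"
    using spacelike_if_lor_orthogonal_timelike[of p m] pp mp by (cases "m = 0") (auto simp: refl_self refl_null)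
  define c where "c = lor s t"
  have s: "s = m + c *\<^sub>R t"
    unfolding m_def c_def by simp
  have "\<beta> s = refl t (- m + c *\<^sub>R t)"
    unfolding \<beta>_def s using \<open>refl m m = - m\<close> mt by (simp add: refl_add refl_scaleR refl_fixed)
  then have "\<beta> s = - s"
    unfolding s using tt mt by (simp add: refl_diff refl_add refl_minus refl_scaleR refl_self refl_fixed)
  have "lor p t = 0" "lor q t = 0"
    using pt assms(4) by (simp_all add: lorentz_frame_def lor_sym[of q t])
  then have flip: "\<beta> p = p" "\<beta> t = - t" "\<beta> q = q"
    unfolding \<beta>_def using mp mq mt tt by (simp_all add: refl_fixed refl_self)
  have lin: "linear \<beta>"
    unfolding \<beta>_def by (rule linear_refl_refl)
  have "lor (\<beta> x) (\<beta> y) = lor x y" for x y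
    unfolding \<beta>_def by (simp add: lor_refl)
  moreover have "\<beta> (\<beta> x) = x" for x
    unfolding \<beta>_def using refl_commute[OF mt(2)] by (simp add: refl_refl)
  moreover have "isometry \<beta>"
    unfolding \<beta>_def using isometry_comp isometry_refl mm tt by simp
  ultimately show ?thesis
    using that[OF lin] H4_moved_by_flip[OF pt \<open>p \<in> H4\<close> lin flip(1,2)] flip \<open>\<beta> s = - s\<close> by blast
qed

lemma involution_refl_refl_flip:
  assumes frame: "lorentz_frame p t" "p \<in> H4"
    and uv: "u \<in> span {p, t}" "lor u u > 0" "v \<in> span {p, t}" "lor v v > 0"
    and fixed: "\<And>z. z \<in> span {p, t} \<Longrightarrow> refl u (refl v z) = z \<Longrightarrow> z = 0"
    and \<beta>: "linear \<beta>" "\<And>x y. lor (\<beta> x) (\<beta> y) = lor x y" "\<And>x. \<beta> (\<beta> x) = x" "isometry \<beta>"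
      "\<beta> p = p" "\<beta> t = - t"
  shows "involution (\<lambda>x. refl u (refl v (\<beta> x)))" "involution (\<lambda>x. \<beta> (refl u (refl v x)))"
proof -
  have inv: "refl u (refl v (\<beta> (refl u (refl v (\<beta> x))))) = x" for x
    using refl_refl_flip_involutive[OF frame(1) uv \<beta>(1-3,5,6)] .
  have iso: "isometry (\<lambda>x. refl u (refl v x))"
    using isometry_comp[OF isometry_refl isometry_refl] uv by simp
  have "refl u (refl v p) \<noteq> p"
    using fixed[of p] frame by (auto simp: span_base lorentz_frame_def)
  then show "involution (\<lambda>x. refl u (refl v (\<beta> x)))"
    unfolding involution_def using inv isometry_comp[OF iso \<beta>(4)] \<beta>(5) frame(2)
    by (auto intro!: bexI[of _ p])
  have "\<beta> (refl u (refl v (\<beta> (refl u (refl v x))))) = x" for x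
    using arg_cong[OF inv[of "\<beta> x"], of \<beta>] \<beta>(3) by simp
  moreover have "\<beta> (refl u (refl v p)) \<noteq> p"
    using \<open>refl u (refl v p) \<noteq> p\<close> \<beta>(3,5) by metis
  ultimately show "involution (\<lambda>x. \<beta> (refl u (refl v x)))"
    unfolding involution_def using isometry_comp[OF \<beta>(4) iso] frame(2)
    by (auto intro!: bexI[of _ p])
qed

lemma linked_if_common_perpendicular:
  assumes pt: "lorentz_frame p t" and qs: "lorentz_frame q s" and "p \<in> H4" "q \<in> H4"
    and "lor t q = 0" "lor p s = 0"
    and A: "translates_along A (span {p, t})" and B: "translates_along B (span {q, s})"
  shows "linked A B"
proof -
  obtain \<beta> where \<beta>: "linear \<beta>" "\<And>x y. lor (\<beta> x) (\<beta> y) = lor x y" "\<And>x. \<beta> (\<beta> x) = x"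
    "isometry \<beta>" "\<exists>x\<in>H4. \<beta> x \<noteq> x" "\<beta> p = p" "\<beta> t = - t" "\<beta> q = q" "\<beta> s = - s"
    using exists_flip_involution[OF pt qs assms(3,5,6)] by blast
  obtain uA vA where uvA: "uA \<in> span {p, t}" "lor uA uA > 0" "vA \<in> span {p, t}" "lor vA vA > 0"
    "\<forall>x\<in>H4. A x = refl uA (refl vA x)" "\<forall>z\<in>span {p, t}. refl uA (refl vA z) = z \<longrightarrow> z = 0"
    using A unfolding translates_along_def by blast
  obtain uB vB where uvB: "uB \<in> span {q, s}" "lor uB uB > 0" "vB \<in> span {q, s}" "lor vB vB > 0"
    "\<forall>x\<in>H4. B x = refl uB (refl vB x)" "\<forall>z\<in>span {q, s}. refl uB (refl vB z) = z \<longrightarrow> z = 0"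
    using B unfolding translates_along_def by blast
  have "involution (\<lambda>x. refl uA (refl vA (\<beta> x)))"
    using involution_refl_refl_flip(1)[OF pt assms(3) uvA(1-4) _ \<beta>(1-4,6,7)] uvA(6) by blast
  moreover have "involution (\<lambda>x. \<beta> (refl uB (refl vB x)))"
    using involution_refl_refl_flip(2)[OF qs assms(4) uvB(1-4) _ \<beta>(1-4,8,9)] uvB(6) by blast
  moreover have "involution \<beta>"
    unfolding involution_def using \<beta> by blast
  ultimately show ?thesis
    unfolding linked_def using uvA(5) uvB(5) \<beta>(3)
    by (intro exI[of _ "\<lambda>x. refl uA (refl vA (\<beta> x))"] exI[of _ \<beta>]
        exI[of _ "\<lambda>x. \<beta> (refl uB (refl vB x))"]) auto
qed

theorem theorem7p1:
  fixes A B :: "pt \<Rightarrow> pt" and LA LB :: "pt set"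
  assumes "pure_hyperbolic A" and "pure_hyperbolic B"
    and "axis_of A LA" and "axis_of B LB"
    and "ultra_parallel LA LB"
  shows "(\<exists>P. plane P \<and> orthogonal_to P LA \<and> orthogonal_to P LB) \<and> linked A B"
proof -
  obtain a a' where A: "null_pair a a'" "LA = H4 \<inter> span {a, a'}" "translates_along A (span {a, a'})"
    using pure_hyperbolic_axis[OF assms(1,3)] .
  obtain b b' where B: "null_pair b b'" "LB = H4 \<inter> span {b, b'}" "translates_along B (span {b, b'})"
    using pure_hyperbolic_axis[OF assms(2,4)] .
  obtain p t q s where pq: "lorentz_frame p t" "lorentz_frame q s" "p \<in> H4" "q \<in> H4" "p \<noteq> q"
    "lor t q = 0" "lor p s = 0" and span: "span {p, t} = span {a, a'}" "span {q, s} = span {b, b'}"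
    using common_perpendicular[OF A(1) B(1)] assms(5) A(2) B(2) by metis
  have "\<exists>P. plane P \<and> orthogonal_to P LA \<and> orthogonal_to P LB"
    using exists_plane_orthogonal_to_geodesics[OF pq] unfolding A(2) B(2) span .
  moreover have "linked A B"
    using linked_if_common_perpendicular[OF pq(1-4,6,7)] A(3) B(3) unfolding span by blast
  ultimately show ?thesis
    by blast
qed

end
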